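(* Consider the model below with $\min\{M,M_f,N\}<1$ and $\epsilon_2\ge0$, and fix all parameters other than $\epsilon_1$. (i) There exists $\bar{\epsilon}_{BR}\in[-\infty,\infty)$, depending only on the model parameters, such that for every $\epsilon_1\in\mathbb{R}$ a bounded-rationality equilibrium (BRE) exists if and only if $\epsilon_1\ge\bar{\epsilon}_{BR}$. (ii) If $(M-1)(1-M_f\beta)+\lambda\sigma N<0$, then $\bar{\epsilon}_{BR}=-\infty$, i.e. a BRE exists for every $\epsilon_1\in\mathbb{R}$.
   Context: Parameters: $0<\beta<1$, $\sigma,\lambda,\mu>0$, $\psi>1$, $p,q\in(0,1]$, $M,M_f,N\in(0,1]$. The shock $\epsilon_t$ is a two-state Markov chain on $\{\epsilon_1,\epsilon_2\}$ with $\Pr(\epsilon_{t+1}=\epsilon_1\mid\epsilon_t=\epsilon_1)=p$, $\Pr(\epsilon_{t+1}=\epsilon_2\mid\epsilon_t=\epsilon_2)=q$. Model: $x_t=M E_t x_{t+1}-\sigma(i_t-N E_t\pi_{t+1})+\epsilon_t$, $\pi_t=\lambda x_t+M_f\beta E_t\pi_{t+1}$, $i_t=\max\{\psi\pi_t,-\mu\}$. A BRE is a pair $Y_j=(x_j,\pi_j)\in\mathbb{R}^2$, $j=1,2$, such that for $j=1,2$, with $i_j=\max\{\psi\pi_j,-\mu\}$: $x_j=Mx^e_j-\sigma(i_j-N\pi^e_j)+\epsilon_j$, $\pi_j=\lambda x_j+M_f\beta\pi^e_j$, where $(x^e_1,\pi^e_1)=pY_1+(1-p)Y_2$, $(x^e_2,\pi^e_2)=(1-q)Y_1+qY_2$.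 *)

theory Defs
  imports Complex_Main "HOL-Library.Extended_Real"
begin

definition irate :: "real \<Rightarrow> real \<Rightarrow> real \<Rightarrow> real" where
  "irate psi mu infl = max (psi * infl) (- mu)"

definition is_BRE ::
  "real \<Rightarrow> real \<Rightarrow> real \<Rightarrow> real \<Rightarrow> real \<Rightarrow> real \<Rightarrow> real \<Rightarrow> real \<Rightarrow> real \<Rightarrow> real
   \<Rightarrow> real \<Rightarrow> real \<Rightarrow> real \<Rightarrow> real \<Rightarrow> real \<Rightarrow> real \<Rightarrow> bool" where
  "is_BRE beta sigma lambda mu psi p q M Mf N eps1 eps2 x1 pi1 x2 pi2 \<longleftrightarrow>
     (let xe1 = p * x1 + (1 - p) * x2; pie1 = p * pi1 + (1 - p) * pi2;
          xe2 = (1 - q) * x1 + q * x2; pie2 = (1 - q) * pi1 + q * pi2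
      in x1 = M * xe1 - sigma * (irate psi mu pi1 - N * pie1) + eps1
       \<and> pi1 = lambda * x1 + Mf * beta * pie1
       \<and> x2 = M * xe2 - sigma * (irate psi mu pi2 - N * pie2) + eps2
       \<and> pi2 = lambda * x2 + Mf * beta * pie2)"

definition BRE_exists ::
  "real \<Rightarrow> real \<Rightarrow> real \<Rightarrow> real \<Rightarrow> real \<Rightarrow> real \<Rightarrow> real \<Rightarrow> real \<Rightarrow> real \<Rightarrow> real
   \<Rightarrow> real \<Rightarrow> real \<Rightarrow> bool" where
  "BRE_exists beta sigma lambda mu psi p q M Mf N eps1 eps2 \<longleftrightarrow>
     (\<exists>x1 pi1 x2 pi2. is_BRE beta sigma lambda mu psi p q M Mf N eps1 eps2 x1 pi1 x2 pi2)"

end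

theory Submission
  imports Defs "HOL-Analysis.Analysis"
begin

text \<open>Eliminating output with the Phillips curves and substituting \<open>\<pi> = U - \<mu>/\<psi>\<close> turns a BRE
  into a solution of \<open>\<Phi>(U, V) = (\<epsilon>\<^sub>1 + shift, \<epsilon>\<^sub>2 + shift)\<close>, where
  \<open>\<Phi>(U, V) = A (U, V) + \<sigma>\<psi> (max U 0, max V 0)\<close> and \<open>A\<close> has nonpositive off-diagonal entries
  and both row sums equal to \<open>row_sum\<close>. The admissible \<open>\<epsilon>\<^sub>1\<close> thus form a horizontal slice of the
  range of \<open>\<Phi>\<close>. That range is closed, being a union of four linear images of the quadrant
  (\<open>\<Phi>\<close> is linear on each orthant). For \<open>\<epsilon>\<^sub>2 + shift \<ge> 0\<close> the slice contains all nonnegative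
  values, because \<open>A + \<sigma>\<psi> I\<close> is an M-matrix, and is upward closed by the intermediate value
  theorem along the curve solving the second equation; so it is \<open>[\<epsilon>, \<infinity>)\<close> or all of \<open>\<real>\<close>.
  If \<open>row_sum > 0\<close>, then \<open>A\<close> itself is an M-matrix, the slice is unbounded below and hence
  everything; \<open>row_sum > 0\<close> is exactly \<open>(M - 1)(1 - M\<^sub>f\<beta>) + \<lambda>\<sigma>N < 0\<close>.\<close>

lemma nonneg_quadrant_eq_convex_cone_hull:
  "{z :: real \<times> real. 0 \<le> fst z \<and> 0 \<le> snd z} = convex_cone hull {(1, 0), (0, 1)}"
proof
  show "{z :: real \<times> real. 0 \<le> fst z \<and> 0 \<le> snd z} \<subseteq> convex_cone hull {(1, 0), (0, 1)}"
  proof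
    fix z :: "real \<times> real"
    assume "z \<in> {z. 0 \<le> fst z \<and> 0 \<le> snd z}"
    then have "fst z *\<^sub>R (1, 0) + snd z *\<^sub>R (0, 1) \<in> convex_cone hull {(1 :: real, 0 :: real), (0, 1)}"
      by (intro convex_cone_hull_add convex_cone_hull_mul) (auto intro: hull_inc)
    then show "z \<in> convex_cone hull {(1, 0), (0, 1)}"
      by (cases z) simp
  qed
  show "convex_cone hull {(1, 0), (0, 1)} \<subseteq> {z :: real \<times> real. 0 \<le> fst z \<and> 0 \<le> snd z}"
  proof (rule hull_minimal)
    show "convex_cone {z :: real \<times> real. 0 \<le> fst z \<and> 0 \<le> snd z}"
      unfolding convex_cone_def conic_def convex_def
      by (auto intro!: add_nonneg_nonneg mult_nonneg_nonneg)
  qed auto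
qed

lemma closed_linear_image_nonneg_quadrant:
  fixes f :: "real \<times> real \<Rightarrow> 'a :: euclidean_space"
  assumes "linear f"
  shows "closed (f ` {z. 0 \<le> fst z \<and> 0 \<le> snd z})"
  unfolding nonneg_quadrant_eq_convex_cone_hull convex_cone_hull_linear_image[OF assms, symmetric]
  by (rule closed_convex_cone_hull) simp

lemma continuous_attains_between:
  fixes f :: "real \<Rightarrow> real"
  assumes "continuous_on UNIV f" "f a \<le> y" "y \<le> f b"
  shows "\<exists>x. f x = y"
proof -
  have "connected (range f)"
    using assms(1) by (rule connected_continuous_image) simp
  then show ?thesis
    using assms(2,3) unfolding connected_iff_interval by blast
qed

lemma closed_upward_closed_eq_ereal_atLeast:
  fixes S :: "real set"
  assumes "closed S" "S \<noteq> {}" and up: "\<And>x y. x \<in> S \<Longrightarrow> x \<le> y \<Longrightarrow> y \<in> S"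
  shows "\<exists>e :: ereal. e < \<infinity> \<and> (\<forall>x. x \<in> S \<longleftrightarrow> e \<le> ereal x)"
proof (cases "bdd_below S")
  case True
  have "Inf S \<in> S"
    by (rule closed_contains_Inf[OF assms(2) True assms(1)])
  then have "x \<in> S \<longleftrightarrow> Inf S \<le> x" for x
    using cInf_lower[OF _ True] up by blast
  then show ?thesis
    by (intro exI[of _ "ereal (Inf S)"]) simp
next
  case False
  have "x \<in> S" for x
  proof -
    obtain y where "y \<in> S" "y < x"
      using False unfolding bdd_below_def by (meson not_le)
    then show ?thesis
      using up[of y x] by simp
  qed
  then show ?thesis
    by (intro exI[of _ "-\<infinity>"]) simp
qed

lemma Z_matrix_det_pos:
  fixes a b c d :: real
  assumes "b \<le> 0" "c \<le> 0" "0 < a + b" "0 < c + d"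
  shows "0 < a * d - b * c"
proof -
  have "(- b) * (- c) \<le> (- b) * d"
    using assms by (intro mult_left_mono) auto
  also have "\<dots> < a * d"
    using assms by (intro mult_strict_right_mono) auto
  finally show ?thesis
    by simp
qed

lemma cramer_2x2:
  fixes a b c d X Y :: real
  assumes "a * d - b * c \<noteq> 0"
  shows "a * ((d * X - b * Y) / (a * d - b * c)) + b * ((a * Y - c * X) / (a * d - b * c)) = X"
    and "c * ((d * X - b * Y) / (a * d - b * c)) + d * ((a * Y - c * X) / (a * d - b * c)) = Y"
proof -
  have "a * (d * X - b * Y) + b * (a * Y - c * X) = (a * d - b * c) * X"
    and "c * (d * X - b * Y) + d * (a * Y - c * X) = (a * d - b * c) * Y"
    by (simp_all add: algebra_simps)
  with assms show "a * ((d * X - b * Y) / (a * d - b * c)) + b * ((a * Y - c * X) / (a * d - b * c)) = X"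
    and "c * ((d * X - b * Y) / (a * d - b * c)) + d * ((a * Y - c * X) / (a * d - b * c)) = Y"
    by (simp_all add: add_divide_distrib[symmetric] nonzero_divide_eq_eq)
qed

definition kinked_map :: "real \<Rightarrow> real \<Rightarrow> real \<Rightarrow> real \<Rightarrow> real \<Rightarrow> real \<times> real \<Rightarrow> real \<times> real" where
  "kinked_map a11 a12 a21 a22 k =
     (\<lambda>(U, V). (a11 * U + a12 * V + k * max U 0, a21 * U + a22 * V + k * max V 0))"

lemma kinked_map_apply [simp]:
  "kinked_map a11 a12 a21 a22 k (U, V) = (a11 * U + a12 * V + k * max U 0, a21 * U + a22 * V + k * max V 0)"
  by (simp add: kinked_map_def)

lemma closed_range_kinked_map: "closed (range (kinked_map a11 a12 a21 a22 k))"
proof -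
  let ?Q = "{z :: real \<times> real. 0 \<le> fst z \<and> 0 \<le> snd z}"
  define G where "G s t = (\<lambda>(u, v). ((a11 * s + k * max s 0) * u + a12 * t * v,
                                       a21 * s * u + (a22 * t + k * max t 0) * v))" for s t :: real
  have lin: "linear (G s t)" for s t
    unfolding G_def linear_iff by (auto simp: algebra_simps)
  have max_scale: "max (s * u) 0 = max s 0 * u" if "0 \<le> u" for s u :: real
    using that by (cases "0 \<le> s") (auto simp: max_def mult_le_0_iff)
  have on_orthant: "kinked_map a11 a12 a21 a22 k (s * u, t * v) = G s t (u, v)"
    if "0 \<le> u" "0 \<le> v" for s t u v
    using that by (simp add: G_def max_scale algebra_simps)
  have "range (kinked_map a11 a12 a21 a22 k) = (\<Union>s\<in>{-1, 1}. \<Union>t\<in>{-1, 1}. G s t ` ?Q)"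
  proof (intro equalityI subsetI)
    fix w assume "w \<in> range (kinked_map a11 a12 a21 a22 k)"
    then obtain U V where w: "w = kinked_map a11 a12 a21 a22 k (U, V)"
      by auto
    define s :: real where "s = (if 0 \<le> U then 1 else -1)"
    define t :: real where "t = (if 0 \<le> V then 1 else -1)"
    have "s * \<bar>U\<bar> = U" "t * \<bar>V\<bar> = V"
      by (simp_all add: s_def t_def)
    then have "w = G s t (\<bar>U\<bar>, \<bar>V\<bar>)"
      using w on_orthant[of "\<bar>U\<bar>" "\<bar>V\<bar>" s t] by simp
    moreover have "s \<in> {-1, 1}" "t \<in> {-1, 1}" "(\<bar>U\<bar>, \<bar>V\<bar>) \<in> ?Q"
      by (simp_all add: s_def t_def)
    ultimately show "w \<in> (\<Union>s\<in>{-1, 1}. \<Union>t\<in>{-1, 1}. G s t ` ?Q)"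
      by blast
  next
    fix w assume "w \<in> (\<Union>s\<in>{-1, 1}. \<Union>t\<in>{-1, 1}. G s t ` ?Q)"
    then obtain s t u v where "0 \<le> u" "0 \<le> v" "w = G s t (u, v)"
      by auto
    then show "w \<in> range (kinked_map a11 a12 a21 a22 k)"
      using on_orthant by (metis rangeI)
  qed
  then show ?thesis
    by (simp add: closed_Un closed_linear_image_nonneg_quadrant[OF lin])
qed

lemma mem_range_pair_iff: "(X, Y) \<in> range f \<longleftrightarrow> (\<exists>U V. f (U, V) = (X, Y))"
  by (metis UNIV_I image_iff prod.collapse)

locale Z_kinked_map =
  fixes a11 a12 a21 a22 k :: real
  assumes offdiag_nonpos: "a12 \<le> 0" "a21 \<le> 0"
    and row_sums_pos: "0 < a11 + a12 + k" "0 < a21 + a22 + k"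
    and kink_pos: "0 < k"
begin

abbreviation \<Phi> where "\<Phi> \<equiv> kinked_map a11 a12 a21 a22 k"

lemma nonneg_in_range:
  assumes "0 \<le> X" "0 \<le> Y"
  shows "(X, Y) \<in> range \<Phi>"
proof -
  define det where "det = (a11 + k) * (a22 + k) - a12 * a21"
  have "0 < det"
    unfolding det_def using offdiag_nonpos row_sums_pos
    by (intro Z_matrix_det_pos) (simp_all add: algebra_simps)
  define U where "U = ((a22 + k) * X - a12 * Y) / det"
  define V where "V = ((a11 + k) * Y - a21 * X) / det"
  have "0 \<le> a11 + k" "0 \<le> a22 + k"
    using offdiag_nonpos row_sums_pos by linarith+
  moreover have "a12 * Y \<le> 0" "a21 * X \<le> 0"
    using assms offdiag_nonpos by (simp_all add: mult_nonpos_nonneg)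
  moreover have "0 \<le> (a22 + k) * X" "0 \<le> (a11 + k) * Y"
    using calculation assms by simp_all
  ultimately have "0 \<le> (a22 + k) * X - a12 * Y" "0 \<le> (a11 + k) * Y - a21 * X"
    by linarith+
  then have "0 \<le> U" "0 \<le> V"
    unfolding U_def V_def using \<open>0 < det\<close> by simp_all
  then have "\<Phi> (U, V) = ((a11 + k) * U + a12 * V, a21 * U + (a22 + k) * V)"
    by (simp add: algebra_simps)
  also have "\<dots> = (X, Y)"
    using cramer_2x2[where a = "a11 + k" and b = a12 and c = a21 and d = "a22 + k"] \<open>0 < det\<close>
    unfolding U_def V_def det_def by simp
  finally show ?thesis
    by (metis rangeI)
qed

lemma range_upward_closed_decoupled:
  assumes "a21 = 0" "(X0, Y) \<in> range \<Phi>" "X0 \<le> X1"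
  shows "(X1, Y) \<in> range \<Phi>"
proof -
  obtain U0 V0 where UV0: "\<Phi> (U0, V0) = (X0, Y)"
    using assms(2) unfolding mem_range_pair_iff by blast
  define f where "f U = a11 * U + a12 * V0 + k * max U 0" for U
  define U1 where "U1 = \<bar>X1 - a12 * V0\<bar> / (a11 + k)"
  have "0 < a11 + k"
    using offdiag_nonpos row_sums_pos by linarith
  then have "0 \<le> U1" "(a11 + k) * U1 = \<bar>X1 - a12 * V0\<bar>"
    by (simp_all add: U1_def)
  then have "f U1 = \<bar>X1 - a12 * V0\<bar> + a12 * V0"
    by (simp add: f_def algebra_simps)
  then have "X1 \<le> f U1"
    by linarith
  moreover have "f U0 \<le> X1"
    using UV0 assms(3) by (simp add: f_def)
  moreover have "continuous_on UNIV f"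
    unfolding f_def by (intro continuous_intros)
  ultimately obtain U where "f U = X1"
    using continuous_attains_between by blast
  then have "\<Phi> (U, V0) = (X1, Y)"
    using UV0 assms(1) by (simp add: f_def)
  then show ?thesis
    by (metis rangeI)
qed

lemma range_upward_closed_coupled:
  assumes "a21 \<noteq> 0" "0 \<le> Y" "(X0, Y) \<in> range \<Phi>" "X0 \<le> X1" "X1 \<le> 0"
  shows "(X1, Y) \<in> range \<Phi>"
proof -
  obtain U0 V0 where UV0: "\<Phi> (U0, V0) = (X0, Y)"
    using assms(3) unfolding mem_range_pair_iff by blast
  obtain Us Vs where UVs: "\<Phi> (Us, Vs) = (0, Y)"
    using nonneg_in_range[OF order_refl assms(2)] unfolding mem_range_pair_iff by blast
  define g where "g V = (Y - a22 * V - k * max V 0) / a21" for V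
  define h where "h V = a11 * g V + a12 * V + k * max (g V) 0" for V
  have on_fibre: "snd (\<Phi> (U, V)) = Y \<longleftrightarrow> U = g V" for U V
    using assms(1) by (auto simp: g_def field_simps)
  then have \<Phi>_g: "\<Phi> (g V, V) = (h V, Y)" for V
    by (simp add: h_def)
  have "h V0 = X0" "h Vs = 0"
    using UV0 UVs on_fibre \<Phi>_g by (metis fst_conv snd_conv)+
  moreover have "continuous_on UNIV h"
    unfolding h_def g_def using assms(1) by (intro continuous_intros) auto
  ultimately obtain V where "h V = X1"
    using continuous_attains_between[of h V0 X1 Vs] assms(4,5) by auto
  then show ?thesis
    using \<Phi>_g by (metis rangeI)
qed

lemma range_upward_closed:
  assumes "0 \<le> Y" "(X0, Y) \<in> range \<Phi>" "X0 \<le> X1"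
  shows "(X1, Y) \<in> range \<Phi>"
proof (cases "a21 = 0")
  case True
  then show ?thesis
    using assms(2,3) by (rule range_upward_closed_decoupled)
next
  case False
  show ?thesis
  proof (cases "0 \<le> X1")
    case True
    then show ?thesis
      using nonneg_in_range assms(1) by blast
  next
    case False
    then show ?thesis
      using range_upward_closed_coupled[OF \<open>a21 \<noteq> 0\<close> assms] by simp
  qed
qed

lemma range_unbounded_below_decoupled:
  assumes "a21 = 0" "0 < a11 + a12" "0 \<le> Y"
  shows "\<exists>X0 \<le> X1. (X0, Y) \<in> range \<Phi>"
proof -
  have "0 < a11" "0 < a22 + k"
    using assms offdiag_nonpos row_sums_pos by linarith+
  define V where "V = Y / (a22 + k)"
  define X0 where "X0 = min X1 (a12 * V)"
  define U where "U = (X0 - a12 * V) / a11"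
  have "0 \<le> V" "U \<le> 0"
    unfolding V_def U_def X0_def using \<open>0 < a11\<close> \<open>0 < a22 + k\<close> assms(3)
    by (auto simp: divide_nonpos_pos)
  then have "\<Phi> (U, V) = (a11 * U + a12 * V, (a22 + k) * V)"
    using assms(1) by (simp add: algebra_simps)
  also have "\<dots> = (X0, Y)"
    using \<open>0 < a11\<close> \<open>0 < a22 + k\<close> by (simp add: U_def V_def)
  finally show ?thesis
    by (metis X0_def min.cobounded1 rangeI)
qed

text \<open>Cramer's rule for \<open>A (U, V) = (X\<^sub>0, Y)\<close> gives \<open>U, V \<le> 0\<close> once \<open>X\<^sub>0\<close> is small enough,
  and there \<open>\<Phi>\<close> coincides with \<open>A\<close>.\<close>

lemma range_unbounded_below_coupled:
  assumes "a21 \<noteq> 0" "0 < a11 + a12" "0 < a21 + a22" "0 \<le> Y"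
  shows "\<exists>X0 \<le> X1. (X0, Y) \<in> range \<Phi>"
proof -
  have "a21 < 0" "0 < a22"
    using assms offdiag_nonpos by linarith+
  define det where "det = a11 * a22 - a12 * a21"
  have "0 < det"
    unfolding det_def using offdiag_nonpos assms by (intro Z_matrix_det_pos)
  define X0 where "X0 = min X1 (min (a12 * Y / a22) (a11 * Y / a21))"
  define U where "U = (a22 * X0 - a12 * Y) / det"
  define V where "V = (a11 * Y - a21 * X0) / det"
  have "X0 \<le> a12 * Y / a22" "X0 \<le> a11 * Y / a21"
    by (simp_all add: X0_def)
  then have "a22 * X0 \<le> a12 * Y" "a11 * Y \<le> a21 * X0"
    using \<open>0 < a22\<close> \<open>a21 < 0\<close> by (simp_all add: pos_le_divide_eq neg_le_divide_eq algebra_simps)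
  then have "U \<le> 0" "V \<le> 0"
    unfolding U_def V_def using \<open>0 < det\<close> by (auto simp: divide_nonpos_pos)
  then have "\<Phi> (U, V) = (a11 * U + a12 * V, a21 * U + a22 * V)"
    by simp
  also have "\<dots> = (X0, Y)"
    using cramer_2x2[where a = a11 and b = a12 and c = a21 and d = a22] \<open>0 < det\<close>
    unfolding U_def V_def det_def by simp
  finally show ?thesis
    by (metis X0_def min.cobounded1 rangeI)
qed

lemma halfplane_in_range:
  assumes "0 < a11 + a12" "0 < a21 + a22" "0 \<le> Y"
  shows "(X, Y) \<in> range \<Phi>"
proof -
  obtain X0 where "X0 \<le> X" "(X0, Y) \<in> range \<Phi>"
    using range_unbounded_below_decoupled range_unbounded_below_coupled assms by blast
  then show ?thesis
    using range_upward_closed assms(3) by blast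
qed

end

locale BRE_model =
  fixes beta sigma lambda mu psi p q M Mf N :: real
  assumes beta: "0 < beta" "beta < 1"
    and sigma: "0 < sigma" and lambda: "0 < lambda" and mu: "0 < mu" and psi: "1 < psi"
    and p: "0 < p" "p \<le> 1" and q: "0 < q" "q \<le> 1"
    and M: "0 < M" "M \<le> 1" and Mf: "0 < Mf" "Mf \<le> 1" and N: "0 < N" "N \<le> 1"
begin

definition implied_output :: "real \<Rightarrow> real \<Rightarrow> real" where
  "implied_output infl infl_exp = (infl - Mf * beta * infl_exp) / lambda"

text \<open>The inflation system has matrix \<open>(I - M E) (I - M\<^sub>f \<beta> E) / \<lambda> - \<sigma> N E\<close> with the transition
  matrix \<open>E = (p, 1 - p; 1 - q, q)\<close>; its rows are \<open>(own_coeff p q, cross_coeff p q)\<close> and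
  \<open>(cross_coeff q p, own_coeff q p)\<close>, the first argument being the persistence of the current state.\<close>

definition own_coeff :: "real \<Rightarrow> real \<Rightarrow> real" where
  "own_coeff s t =
     ((1 - M * s) * (1 - Mf * beta * s) + M * (1 - s) * Mf * beta * (1 - t)) / lambda - sigma * N * s"

definition cross_coeff :: "real \<Rightarrow> real \<Rightarrow> real" where
  "cross_coeff s t = - (1 - s) * (Mf * beta * (1 - M * s) + M * (1 - Mf * beta * t) + lambda * sigma * N) / lambda"

definition row_sum :: real where
  "row_sum = (1 - M) * (1 - Mf * beta) / lambda - sigma * N"

text \<open>Substituting \<open>\<pi> = U - \<mu>/\<psi>\<close> turns \<open>\<sigma> irate \<psi> \<mu> \<pi>\<close> into \<open>\<sigma>\<psi> max U 0 - \<sigma>\<mu>\<close>;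
  \<open>shift\<close> collects the resulting constants.\<close>

definition shift :: real where
  "shift = mu / psi * (row_sum + sigma * psi)"

lemma phillips_iff_implied_output: "infl = lambda * x + Mf * beta * infl_exp \<longleftrightarrow> x = implied_output infl infl_exp"
  using lambda by (auto simp: implied_output_def field_simps)

lemma IS_residual_eq:
  assumes "x = implied_output infl (s * infl + (1 - s) * infl')"
    and "x' = implied_output infl' ((1 - t) * infl + t * infl')"
  shows "x - M * (s * x + (1 - s) * x') + sigma * (i - N * (s * infl + (1 - s) * infl'))
    = own_coeff s t * infl + cross_coeff s t * infl' + sigma * i"
  unfolding assms implied_output_def own_coeff_def cross_coeff_def using lambda
  by (simp add: field_simps; simp add: algebra_simps)

lemma coeff_row_sum: "own_coeff s t + cross_coeff s t = row_sum"
  using lambda by (simp add: own_coeff_def cross_coeff_def row_sum_def field_simps; simp add: algebra_simps)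

lemma cross_coeff_nonpos:
  assumes "0 \<le> s" "s \<le> 1" "0 \<le> t" "t \<le> 1"
  shows "cross_coeff s t \<le> 0"
proof -
  have "0 \<le> Mf * beta" "Mf * beta \<le> 1"
    using Mf beta by (simp_all add: mult_le_one)
  then have "M * s \<le> 1" "Mf * beta * t \<le> 1"
    using M assms by (simp_all add: mult_le_one)
  then have "0 \<le> (1 - s) * (Mf * beta * (1 - M * s) + M * (1 - Mf * beta * t) + lambda * sigma * N)"
    using assms M N sigma lambda \<open>0 \<le> Mf * beta\<close> by simp
  moreover have "cross_coeff s t
      = - ((1 - s) * (Mf * beta * (1 - M * s) + M * (1 - Mf * beta * t) + lambda * sigma * N) / lambda)"
    unfolding cross_coeff_def by (simp only: minus_mult_left divide_minus_left)
  ultimately show ?thesis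
    using lambda by (simp add: divide_nonneg_pos)
qed

lemma neg_gain_less_row_sum: "- (sigma * psi) < row_sum"
proof -
  have "0 \<le> (1 - M) * (1 - Mf * beta) / lambda"
    using M Mf beta lambda by (simp add: mult_le_one)
  moreover have "sigma * N < sigma * psi"
    using sigma N psi by simp
  ultimately show ?thesis
    unfolding row_sum_def by linarith
qed

lemma shift_pos: "0 < shift"
  unfolding shift_def using neg_gain_less_row_sum mu psi by simp

sublocale Z_kinked_map "own_coeff p q" "cross_coeff p q" "cross_coeff q p" "own_coeff q p" "sigma * psi"
proof
  show "cross_coeff p q \<le> 0" "cross_coeff q p \<le> 0"
    using p q by (simp_all add: cross_coeff_nonpos)
  show "0 < own_coeff p q + cross_coeff p q + sigma * psi" "0 < cross_coeff q p + own_coeff q p + sigma * psi"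
    using neg_gain_less_row_sum coeff_row_sum[of p q] coeff_row_sum[of q p] by linarith+
  show "0 < sigma * psi"
    using sigma psi by simp
qed

lemma is_BRE_iff:
  "is_BRE beta sigma lambda mu psi p q M Mf N e1 e2 x1 pi1 x2 pi2 \<longleftrightarrow>
     x1 = implied_output pi1 (p * pi1 + (1 - p) * pi2) \<and> x2 = implied_output pi2 ((1 - q) * pi1 + q * pi2) \<and>
     own_coeff p q * pi1 + cross_coeff p q * pi2 + sigma * irate psi mu pi1 = e1 \<and>
     cross_coeff q p * pi1 + own_coeff q p * pi2 + sigma * irate psi mu pi2 = e2"
proof (cases "x1 = implied_output pi1 (p * pi1 + (1 - p) * pi2) \<and> x2 = implied_output pi2 ((1 - q) * pi1 + q * pi2)")
  case True
  then have "x1 - M * (p * x1 + (1 - p) * x2) + sigma * (irate psi mu pi1 - N * (p * pi1 + (1 - p) * pi2))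
      = own_coeff p q * pi1 + cross_coeff p q * pi2 + sigma * irate psi mu pi1"
    by (intro IS_residual_eq) auto
  moreover have "x2 - M * ((1 - q) * x1 + q * x2) + sigma * (irate psi mu pi2 - N * ((1 - q) * pi1 + q * pi2))
      = cross_coeff q p * pi1 + own_coeff q p * pi2 + sigma * irate psi mu pi2"
    using IS_residual_eq[of x2 pi2 q pi1 x1 p "irate psi mu pi2"] True by (simp add: ac_simps)
  ultimately show ?thesis
    using True unfolding is_BRE_def Let_def phillips_iff_implied_output by auto
qed (auto simp: is_BRE_def Let_def phillips_iff_implied_output)

lemma BRE_exists_iff_inflation_system:
  "BRE_exists beta sigma lambda mu psi p q M Mf N e1 e2 \<longleftrightarrow>
     (\<exists>pi1 pi2. own_coeff p q * pi1 + cross_coeff p q * pi2 + sigma * irate psi mu pi1 = e1 \<and>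
               cross_coeff q p * pi1 + own_coeff q p * pi2 + sigma * irate psi mu pi2 = e2)"
  unfolding BRE_exists_def is_BRE_iff by blast

lemma irate_shifted: "irate psi mu (U - mu / psi) = psi * max U 0 - mu"
proof -
  have "psi * (U - mu / psi) = psi * U - mu"
    using psi by (simp add: field_simps)
  moreover have "max (psi * U - mu) (- mu) = psi * max U 0 - mu"
    using psi by (cases "0 \<le> U") (auto simp: max_def mult_le_0_iff)
  ultimately show ?thesis
    by (simp add: irate_def)
qed

lemma shifted_equation:
  assumes "a + b = row_sum"
  shows "a * (U - mu / psi) + b * (V - mu / psi) + sigma * irate psi mu (W - mu / psi)
    = a * U + b * V + sigma * psi * max W 0 - shift"
proof -
  have "mu / psi * (a + b) + sigma * mu = shift"
    unfolding assms shift_def using psi by (simp add: field_simps)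
  moreover have "a * (U - mu / psi) + b * (V - mu / psi) + sigma * irate psi mu (W - mu / psi)
      = a * U + b * V + sigma * psi * max W 0 - (mu / psi * (a + b) + sigma * mu)"
    unfolding irate_shifted by (simp add: algebra_simps add_divide_distrib)
  ultimately show ?thesis
    by simp
qed

lemma BRE_exists_iff_kinked_range:
  "BRE_exists beta sigma lambda mu psi p q M Mf N e1 e2 \<longleftrightarrow> (e1 + shift, e2 + shift) \<in> range \<Phi>"
proof -
  have shift_vars: "(\<exists>pi1 pi2. P pi1 pi2) \<longleftrightarrow> (\<exists>U V. P (U - mu / psi) (V - mu / psi))" for P
  proof
    assume "\<exists>pi1 pi2. P pi1 pi2"
    then obtain pi1 pi2 where "P (pi1 + mu / psi - mu / psi) (pi2 + mu / psi - mu / psi)"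
      by auto
    then show "\<exists>U V. P (U - mu / psi) (V - mu / psi)"
      by blast
  qed blast
  have "cross_coeff q p + own_coeff q p = row_sum"
    using coeff_row_sum by (simp add: add.commute)
  note shifted = shifted_equation[OF coeff_row_sum] shifted_equation[OF this]
  have "BRE_exists beta sigma lambda mu psi p q M Mf N e1 e2 \<longleftrightarrow>
     (\<exists>U V. own_coeff p q * (U - mu / psi) + cross_coeff p q * (V - mu / psi)
              + sigma * irate psi mu (U - mu / psi) = e1 \<and>
            cross_coeff q p * (U - mu / psi) + own_coeff q p * (V - mu / psi)
              + sigma * irate psi mu (V - mu / psi) = e2)"
    unfolding BRE_exists_iff_inflation_system by (rule shift_vars)
  also have "\<dots> \<longleftrightarrow> (\<exists>U V. \<Phi> (U, V) = (e1 + shift, e2 + shift))"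
    by (simp only: shifted kinked_map_apply prod.inject diff_eq_eq)
  also have "\<dots> \<longleftrightarrow> (e1 + shift, e2 + shift) \<in> range \<Phi>"
    by (rule mem_range_pair_iff[symmetric])
  finally show ?thesis .
qed

lemma closed_BRE_shocks: "closed {e1. BRE_exists beta sigma lambda mu psi p q M Mf N e1 e2}"
proof -
  have slice: "{e1. BRE_exists beta sigma lambda mu psi p q M Mf N e1 e2}
      = (\<lambda>e1. (e1 + shift, e2 + shift)) -` range \<Phi>"
    using BRE_exists_iff_kinked_range by auto
  show ?thesis
    unfolding slice
    by (rule continuous_closed_vimage[OF closed_range_kinked_map]) (intro continuous_intros)
qed

lemma BRE_exists_mono:
  assumes "0 \<le> e2" "BRE_exists beta sigma lambda mu psi p q M Mf N e1 e2" "e1 \<le> e1'"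
  shows "BRE_exists beta sigma lambda mu psi p q M Mf N e1' e2"
  using assms shift_pos range_upward_closed unfolding BRE_exists_iff_kinked_range by simp

lemma BRE_exists_if_ge_neg_shift:
  assumes "0 \<le> e2" "- shift \<le> e1"
  shows "BRE_exists beta sigma lambda mu psi p q M Mf N e1 e2"
  using assms shift_pos nonneg_in_range unfolding BRE_exists_iff_kinked_range by simp

lemma row_sum_pos_iff: "0 < row_sum \<longleftrightarrow> (M - 1) * (1 - Mf * beta) + lambda * sigma * N < 0"
proof -
  have "row_sum = - ((M - 1) * (1 - Mf * beta) + lambda * sigma * N) / lambda"
    using lambda by (simp add: row_sum_def field_simps)
  then show ?thesis
    using lambda by (auto simp: zero_less_divide_iff)
qed

lemma BRE_exists_if_row_sum_pos:
  assumes "0 < row_sum" "0 \<le> e2"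
  shows "BRE_exists beta sigma lambda mu psi p q M Mf N e1 e2"
proof -
  have "0 < own_coeff p q + cross_coeff p q" "0 < cross_coeff q p + own_coeff q p"
    using assms(1) coeff_row_sum[of p q] coeff_row_sum[of q p] by linarith+
  moreover have "0 \<le> e2 + shift"
    using assms(2) shift_pos by simp
  ultimately show ?thesis
    unfolding BRE_exists_iff_kinked_range by (rule halfplane_in_range)
qed

end

theorem proposition4:
  fixes beta sigma lambda mu psi p q M Mf N eps2 :: real
  assumes "0 < beta" "beta < 1" "0 < sigma" "0 < lambda" "0 < mu" "1 < psi"
    and "0 < p" "p \<le> 1" "0 < q" "q \<le> 1"
    and "0 < M" "M \<le> 1" "0 < Mf" "Mf \<le> 1" "0 < N" "N \<le> 1"
    and "min M (min Mf N) < 1"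
    and "0 \<le> eps2"
  shows "(\<exists>eps_bar :: ereal. eps_bar < \<infinity> \<and>
            (\<forall>eps1 :: real. BRE_exists beta sigma lambda mu psi p q M Mf N eps1 eps2
                              \<longleftrightarrow> eps_bar \<le> ereal eps1))
       \<and> ((M - 1) * (1 - Mf * beta) + lambda * sigma * N < 0 \<longrightarrow>
            (\<forall>eps1 :: real. BRE_exists beta sigma lambda mu psi p q M Mf N eps1 eps2))"
proof -
  interpret BRE_model beta sigma lambda mu psi p q M Mf N
    using assms by unfold_locales
  let ?S = "{eps1. BRE_exists beta sigma lambda mu psi p q M Mf N eps1 eps2}"
  have "\<exists>eps_bar :: ereal. eps_bar < \<infinity> \<and> (\<forall>eps1. eps1 \<in> ?S \<longleftrightarrow> eps_bar \<le> ereal eps1)"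
  proof (rule closed_upward_closed_eq_ereal_atLeast)
    show "closed ?S"
      by (rule closed_BRE_shocks)
    show "?S \<noteq> {}"
      using BRE_exists_if_ge_neg_shift[OF \<open>0 \<le> eps2\<close> order_refl] by blast
    show "\<And>x y. x \<in> ?S \<Longrightarrow> x \<le> y \<Longrightarrow> y \<in> ?S"
      using BRE_exists_mono[OF \<open>0 \<le> eps2\<close>] by blast
  qed
  moreover have "(M - 1) * (1 - Mf * beta) + lambda * sigma * N < 0 \<longrightarrow>
      (\<forall>eps1. BRE_exists beta sigma lambda mu psi p q M Mf N eps1 eps2)"
    using row_sum_pos_iff BRE_exists_if_row_sum_pos \<open>0 \<le> eps2\<close> by blast
  ultimately show ?thesis
    by simp
qed

end
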